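(* Let $N$ be a finite nonempty set, $p\notin N$ and $N'=N\cup\{p\}$. Let $\mathscr{C}=\{S_1,\dots,S_k\}$ be a minimal balanced collection on $N$ with (unique) balancing weights $(\lambda_{S_i})_{i\in[k]}$. Let $I\subseteq[k]$ and $\delta\in[k]\setminus I$ satisfy $1>\lambda_I>1-\lambda_{S_\delta}$, where $\lambda_I=\sum_{i\in I}\lambda_{S_i}$. Then $$\mathscr{C}'=\{S_i\cup\{p\}\mid i\in I\}\cup\{S_i\mid i\in[k]\setminus I\}\cup\{S_\delta\cup\{p\}\}$$ is a minimal balanced collection on $N'$ (with balancing weights $\lambda_{S_i}$ for the sets coming from $S_i$, $i\neq\delta$, weight $1-\lambda_I$ for $S_\delta\cup\{p\}$ and weight $\lambda_{S_\delta}-(1-\lambda_I)$ for $S_\delta$).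
   Context: For $T\subseteq N$, $\mathbf{1}^T\in\mathbb{R}^N$ denotes the characteristic vector of $T$. A collection $\mathscr{B}$ of nonempty subsets of a finite set $N$ is balanced if there exist positive weights $(\lambda_S)_{S\in\mathscr{B}}$ (balancing weights) with $\sum_{S\in\mathscr{B}}\lambda_S\mathbf{1}^S=\mathbf{1}^N$. A balanced collection is minimal if it contains no balanced proper subcollection; equivalently, its system of balancing weights is unique. $[k]=\{1,\dots,k\}$. *)

theory Defs
  imports Complex_Main
begin

definition balancing_weights :: "'a set \<Rightarrow> 'a set set \<Rightarrow> ('a set \<Rightarrow> real) \<Rightarrow> bool" where
  "balancing_weights N B w \<longleftrightarrow>
     (\<forall>S\<in>B. S \<noteq> {} \<and> S \<subseteq> N) \<and> finite B \<and>
     (\<forall>S\<in>B. w S > 0) \<and>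
     (\<forall>i\<in>N. (\<Sum>S\<in>{S\<in>B. i \<in> S}. w S) = 1)"

definition balanced :: "'a set \<Rightarrow> 'a set set \<Rightarrow> bool" where
  "balanced N B \<longleftrightarrow> (\<exists>w. balancing_weights N B w)"

definition minimal_balanced :: "'a set \<Rightarrow> 'a set set \<Rightarrow> bool" where
  "minimal_balanced N B \<longleftrightarrow> balanced N B \<and> (\<forall>B'. B' \<subset> B \<longrightarrow> \<not> balanced N B')"

end

theory Submission
  imports Defs
begin

text \<open>Call nonnegative weights balancing the collection \<^emph>\<open>weakly\<close> balancing. A collection is
  minimal balanced iff it is balanced and all its weakly balancing weights are strictly positive;
  in particular its weakly balancing weights are unique. Deleting p maps the new collection onto
  the old one, merging only S \<delta> and insert p (S \<delta>), so pushing weakly balancing weights of the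
  new collection forward gives weakly balancing weights of the old one, which must be lam. This
  fixes every new weight except those of S \<delta> and insert p (S \<delta>); with L the sum of the lam (S i)
  for i in I, the constraint at p gives 1 - L to insert p (S \<delta>) and hence lam (S \<delta>) - (1 - L) to
  S \<delta>. So the new weakly balancing weights are unique, and the hypotheses on L make them positive.\<close>

definition weakly_balancing_weights :: "'a set \<Rightarrow> 'a set set \<Rightarrow> ('a set \<Rightarrow> real) \<Rightarrow> bool" where
  "weakly_balancing_weights N B w \<longleftrightarrow>
     (\<forall>S\<in>B. w S \<ge> 0) \<and> (\<forall>i\<in>N. (\<Sum>S\<in>{S\<in>B. i \<in> S}. w S) = 1)"

lemma balancing_weights_positive_part:
  assumes "\<forall>S\<in>B. S \<noteq> {} \<and> S \<subseteq> N" "finite B" "weakly_balancing_weights N B w"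
  shows "balancing_weights N {S\<in>B. w S > 0} w"
proof -
  have "(\<Sum>S\<in>{S\<in>{S\<in>B. w S > 0}. i \<in> S}. w S) = (\<Sum>S\<in>{S\<in>B. i \<in> S}. w S)" for i
    by (rule sum.mono_neutral_left)
      (use assms in \<open>auto simp: weakly_balancing_weights_def less_le\<close>)
  then show ?thesis
    using assms unfolding balancing_weights_def weakly_balancing_weights_def by auto
qed

lemma weakly_balancing_extend_by_zero:
  assumes "balancing_weights N B' w" "B' \<subseteq> B" "finite B"
  shows "weakly_balancing_weights N B (\<lambda>S. if S \<in> B' then w S else 0)"
proof -
  have "(\<Sum>S\<in>{S\<in>B. i \<in> S}. if S \<in> B' then w S else 0) = (\<Sum>S\<in>{S\<in>B'. i \<in> S}. w S)" for i
    using assms(2,3) by (intro sum.mono_neutral_cong_right) auto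
  then show ?thesis
    using assms(1) unfolding balancing_weights_def weakly_balancing_weights_def
    by (auto simp: less_imp_le)
qed

lemma minimal_balanced_iff_weights_positive:
  "minimal_balanced N B \<longleftrightarrow>
     balanced N B \<and> (\<forall>w. weakly_balancing_weights N B w \<longrightarrow> (\<forall>S\<in>B. w S > 0))"
proof
  assume min: "minimal_balanced N B"
  then obtain w0 where w0: "balancing_weights N B w0"
    unfolding minimal_balanced_def balanced_def by blast
  have "\<forall>S\<in>B. w S > 0" if "weakly_balancing_weights N B w" for w
  proof -
    have "balancing_weights N {S\<in>B. w S > 0} w"
      using w0 that by (intro balancing_weights_positive_part) (auto simp: balancing_weights_def)
    then have "\<not> {S\<in>B. w S > 0} \<subset> B"
      using min unfolding minimal_balanced_def balanced_def by blast
    then show ?thesis by blast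
  qed
  with min show "balanced N B \<and> (\<forall>w. weakly_balancing_weights N B w \<longrightarrow> (\<forall>S\<in>B. w S > 0))"
    unfolding minimal_balanced_def by blast
next
  assume "balanced N B \<and> (\<forall>w. weakly_balancing_weights N B w \<longrightarrow> (\<forall>S\<in>B. w S > 0))"
  then obtain w0 where w0: "balancing_weights N B w0"
    and pos: "\<And>w. weakly_balancing_weights N B w \<Longrightarrow> \<forall>S\<in>B. w S > 0"
    unfolding balanced_def by blast
  show "minimal_balanced N B"
    unfolding minimal_balanced_def
  proof (intro conjI allI impI notI)
    show "balanced N B" using w0 unfolding balanced_def by blast
    fix B' assume sub: "B' \<subset> B" and "balanced N B'"
    then obtain w where "balancing_weights N B' w" unfolding balanced_def by blast
    then have "\<forall>S\<in>B. (if S \<in> B' then w S else 0) > 0"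
      using sub w0 by (intro pos weakly_balancing_extend_by_zero) (auto simp: balancing_weights_def)
    then show False using sub by (auto split: if_splits)
  qed
qed

text \<open>If two balancing weight systems of a minimal balanced collection differed, moving
  from w towards v until the first weight vanishes would give nonnegative balancing weights
  with a zero, contradicting minimality.\<close>
lemma minimal_balanced_weights_le:
  assumes min: "minimal_balanced N B"
    and w: "balancing_weights N B w" and v: "balancing_weights N B v" and "S \<in> B"
  shows "w S \<le> v S"
proof (rule ccontr)
  assume "\<not> w S \<le> v S"
  define X where "X = {S\<in>B. v S < w S}"
  define r where "r S = w S / (w S - v S)" for S
  have "finite X" using w unfolding X_def balancing_weights_def by auto
  moreover have "X \<noteq> {}" using \<open>S \<in> B\<close> \<open>\<not> w S \<le> v S\<close> unfolding X_def by force
  ultimately obtain S0 where S0: "S0 \<in> X" "\<And>S. S \<in> X \<Longrightarrow> r S0 \<le> r S"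
    using arg_min_if_finite(1) arg_min_least by metis
  define t where "t = r S0"
  have w_pos: "\<forall>S\<in>B. w S > 0" using w unfolding balancing_weights_def by auto
  have "t > 0" using S0(1) w_pos unfolding X_def t_def r_def by auto
  define u where "u S = (1 - t) * w S + t * v S" for S
  have "u S \<ge> 0" if "S \<in> B" for S
  proof (cases "S \<in> X")
    case True
    then have "t * (w S - v S) \<le> w S"
      using S0(2)[OF True] unfolding X_def t_def r_def by (simp add: le_divide_eq)
    then show ?thesis unfolding u_def by (simp add: algebra_simps)
  next
    case False
    then have "t * (v S - w S) \<ge> 0" using that \<open>t > 0\<close> unfolding X_def by simp
    moreover have "u S = w S + t * (v S - w S)" unfolding u_def by (simp add: algebra_simps)
    ultimately show ?thesis using w_pos that by fastforce
  qed
  moreover have "(\<Sum>S\<in>{S\<in>B. i \<in> S}. u S) = 1" if "i \<in> N" for i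
  proof -
    have "(\<Sum>S\<in>{S\<in>B. i \<in> S}. u S)
        = (1 - t) * (\<Sum>S\<in>{S\<in>B. i \<in> S}. w S) + t * (\<Sum>S\<in>{S\<in>B. i \<in> S}. v S)"
      unfolding u_def by (simp add: sum.distrib sum_distrib_left)
    then show ?thesis using w v that unfolding balancing_weights_def by auto
  qed
  ultimately have "\<forall>S\<in>B. u S > 0"
    using min unfolding minimal_balanced_iff_weights_positive weakly_balancing_weights_def by blast
  moreover have "u S0 = 0"
    using S0(1) unfolding X_def t_def r_def u_def by (simp add: field_simps)
  ultimately show False using S0(1) unfolding X_def by auto
qed

lemma minimal_balanced_weights_unique:
  assumes min: "minimal_balanced N B" and w: "balancing_weights N B w"
    and v: "weakly_balancing_weights N B v" and "S \<in> B"
  shows "v S = w S"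
proof -
  have "balancing_weights N B v"
    using min v w unfolding minimal_balanced_iff_weights_positive
    by (auto simp: balancing_weights_def weakly_balancing_weights_def)
  then show ?thesis
    using minimal_balanced_weights_le[OF min] w \<open>S \<in> B\<close> by (meson antisym)
qed

definition proj_weights :: "'a \<Rightarrow> 'a set set \<Rightarrow> ('a set \<Rightarrow> real) \<Rightarrow> 'a set \<Rightarrow> real" where
  "proj_weights p C w S = (\<Sum>T\<in>{T\<in>C. T - {p} = S}. w T)"

lemma sum_proj_weights:
  assumes "finite C" "finite B" "(\<lambda>T. T - {p}) ` C \<subseteq> B" "i \<noteq> p"
  shows "(\<Sum>S\<in>{S\<in>B. i \<in> S}. proj_weights p C w S) = (\<Sum>T\<in>{T\<in>C. i \<in> T}. w T)"
proof -
  have "(\<Sum>T\<in>{T\<in>C. i \<in> T}. w T)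
      = (\<Sum>S\<in>{S\<in>B. i \<in> S}. \<Sum>T\<in>{T. T \<in> {T\<in>C. i \<in> T} \<and> T - {p} = S}. w T)"
    using assms by (intro sum.group[symmetric]) auto
  also have "\<dots> = (\<Sum>S\<in>{S\<in>B. i \<in> S}. proj_weights p C w S)"
    unfolding proj_weights_def by (intro sum.cong) auto
  finally show ?thesis by simp
qed

lemma weakly_balancing_proj_weights:
  assumes "weakly_balancing_weights (insert p N) C w" "p \<notin> N"
    and "finite C" "finite B" "(\<lambda>T. T - {p}) ` C \<subseteq> B"
  shows "weakly_balancing_weights N B (proj_weights p C w)"
proof -
  have "(\<Sum>S\<in>{S\<in>B. i \<in> S}. proj_weights p C w S) = 1" if "i \<in> N" for i
    using assms that sum_proj_weights[of C B p i w]
    unfolding weakly_balancing_weights_def by auto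
  moreover have "proj_weights p C w S \<ge> 0" for S
    using assms(1) unfolding proj_weights_def weakly_balancing_weights_def
    by (auto intro: sum_nonneg)
  ultimately show ?thesis unfolding weakly_balancing_weights_def by blast
qed

locale balanced_extension =
  fixes N :: "'a set" and B :: "'a set set" and lam :: "'a set \<Rightarrow> real"
    and A :: "'a set set" and D :: "'a set" and p :: 'a
  assumes p_notin: "p \<notin> N"
    and minimal: "minimal_balanced N B" and lam: "balancing_weights N B lam"
    and A_subset: "A \<subseteq> B" and D_in: "D \<in> B" and D_notin: "D \<notin> A"
    and sum_A_less: "sum lam A < 1" and sum_A_greater: "1 - lam D < sum lam A"
begin

definition extended_collection :: "'a set set" where
  "extended_collection = insert p ` A \<union> (B - A) \<union> {insert p D}"

definition extended_weights :: "'a set \<Rightarrow> real" where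
  "extended_weights T =
     (if T = insert p D then 1 - sum lam A
      else if T = D then lam D - (1 - sum lam A)
      else if p \<in> T then lam (T - {p})
      else lam T)"

lemma p_notin_member: "S \<in> B \<Longrightarrow> p \<notin> S"
  using lam p_notin unfolding balancing_weights_def by blast

lemma finite_B: "finite B"
  using lam unfolding balancing_weights_def by blast

lemma finite_extended_collection: "finite extended_collection"
  using finite_B A_subset finite_subset unfolding extended_collection_def by auto

lemma proj_extended_collection: "(\<lambda>T. T - {p}) ` extended_collection \<subseteq> B"
  using A_subset D_in p_notin_member unfolding extended_collection_def by auto

lemma sum_extended_collection_containing_p:
  "(\<Sum>T\<in>{T\<in>extended_collection. p \<in> T}. w T) = (\<Sum>S\<in>A. w (insert p S)) + w (insert p D)"
proof -
  have "{T\<in>extended_collection. p \<in> T} = insert p ` insert D A"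
    using p_notin_member unfolding extended_collection_def by auto
  moreover have "inj_on (insert p) (insert D A)"
    by (rule inj_onI) (metis A_subset D_in insert_ident insertE p_notin_member subsetD)
  moreover have "finite A" using A_subset finite_B finite_subset by blast
  ultimately show ?thesis using D_notin by (simp add: sum.reindex add.commute)
qed

lemma proj_weights_extended_collection:
  assumes "S \<in> B"
  shows "proj_weights p extended_collection w S =
    (if S \<in> A then w (insert p S) else if S = D then w D + w (insert p D) else w S)"
proof -
  have "p \<notin> S" using assms p_notin_member by blast
  then have "T - {p} = S \<longleftrightarrow> T = S \<or> T = insert p S" for T
    by blast
  then have "{T\<in>extended_collection. T - {p} = S} = extended_collection \<inter> {S, insert p S}"
    by blast
  moreover have "S \<in> extended_collection \<longleftrightarrow> S \<notin> A"
    using assms \<open>p \<notin> S\<close> unfolding extended_collection_def by auto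
  moreover have "insert p S \<in> extended_collection \<longleftrightarrow> S \<in> A \<or> S = D"
  proof -
    have "insert p S = insert p X \<longleftrightarrow> S = X" if "X \<in> B" for X
      using insert_ident[of p S X] \<open>p \<notin> S\<close> p_notin_member[OF that] by blast
    then show ?thesis
      using A_subset D_in p_notin_member unfolding extended_collection_def by blast
  qed
  ultimately have fiber: "{T\<in>extended_collection. T - {p} = S} =
      (if S \<in> A then {insert p S} else if S = D then {D, insert p D} else {S})"
    using D_notin by auto
  have "D \<noteq> insert p D" using D_in p_notin_member by blast
  then show ?thesis unfolding proj_weights_def fiber by simp
qed

lemma extended_weights_lift: "S \<in> A \<Longrightarrow> extended_weights (insert p S) = lam S"
  using A_subset D_in D_notin p_notin_member
  unfolding extended_weights_def by (auto simp: insert_ident Diff_insert_absorb)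

lemma extended_weights_keep: "S \<in> B \<Longrightarrow> S \<noteq> D \<Longrightarrow> extended_weights S = lam S"
  using p_notin_member unfolding extended_weights_def by auto

lemma extended_weights_D: "extended_weights D = lam D - (1 - sum lam A)"
  using D_in p_notin_member unfolding extended_weights_def by auto

lemma extended_weights_insert_D: "extended_weights (insert p D) = 1 - sum lam A"
  unfolding extended_weights_def by simp

lemma extended_weights_positive:
  assumes "T \<in> extended_collection"
  shows "extended_weights T > 0"
proof -
  have lam_pos: "lam S > 0" if "S \<in> B" for S
    using lam that unfolding balancing_weights_def by blast
  from assms consider (lift) S where "S \<in> A" "T = insert p S"
    | (keep) "T \<in> B" "T \<noteq> D" | (D) "T = D" | (insert_D) "T = insert p D"
    unfolding extended_collection_def by blast
  then show ?thesis
  proof cases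
    case lift
    then show ?thesis using extended_weights_lift lam_pos A_subset by auto
  next
    case keep
    then show ?thesis using extended_weights_keep lam_pos by auto
  next
    case D
    then show ?thesis using extended_weights_D sum_A_greater by simp
  next
    case insert_D
    then show ?thesis using extended_weights_insert_D sum_A_less by simp
  qed
qed

lemma proj_extended_weights:
  "S \<in> B \<Longrightarrow> proj_weights p extended_collection extended_weights S = lam S"
  by (simp add: proj_weights_extended_collection extended_weights_lift extended_weights_keep
      extended_weights_D extended_weights_insert_D)

lemma balancing_extended_weights:
  "balancing_weights (insert p N) extended_collection extended_weights"
proof -
  have "(\<Sum>T\<in>{T\<in>extended_collection. i \<in> T}. extended_weights T) = 1" if "i \<in> N" for i
  proof -
    have "(\<Sum>T\<in>{T\<in>extended_collection. i \<in> T}. extended_weights T)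
        = (\<Sum>S\<in>{S\<in>B. i \<in> S}. proj_weights p extended_collection extended_weights S)"
      using that p_notin finite_extended_collection finite_B proj_extended_collection
      by (intro sum_proj_weights[symmetric]) auto
    also have "\<dots> = (\<Sum>S\<in>{S\<in>B. i \<in> S}. lam S)"
      by (intro sum.cong) (auto simp: proj_extended_weights)
    finally show ?thesis using lam that unfolding balancing_weights_def by auto
  qed
  moreover have "(\<Sum>T\<in>{T\<in>extended_collection. p \<in> T}. extended_weights T) = 1"
    by (simp add: sum_extended_collection_containing_p extended_weights_lift
        extended_weights_insert_D)
  moreover have "\<forall>T\<in>extended_collection. T \<noteq> {} \<and> T \<subseteq> insert p N"
    using lam A_subset D_in unfolding balancing_weights_def extended_collection_def by blast
  ultimately show ?thesis
    using finite_extended_collection extended_weights_positive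
    unfolding balancing_weights_def by auto
qed

lemma weakly_balancing_extended_unique:
  assumes v: "weakly_balancing_weights (insert p N) extended_collection v"
    and "T \<in> extended_collection"
  shows "v T = extended_weights T"
proof -
  have proj: "proj_weights p extended_collection v S = lam S" if "S \<in> B" for S
    by (rule minimal_balanced_weights_unique[OF minimal lam _ that],
        rule weakly_balancing_proj_weights[OF v p_notin finite_extended_collection finite_B
          proj_extended_collection])
  have v_lift: "v (insert p S) = lam S" if "S \<in> A" for S
    using proj[of S] that A_subset by (auto simp: proj_weights_extended_collection)
  have "(\<Sum>S\<in>A. v (insert p S)) + v (insert p D) = 1"
    using v sum_extended_collection_containing_p[of v] unfolding weakly_balancing_weights_def by simp
  then have v_insert_D: "v (insert p D) = 1 - sum lam A"
    using v_lift by simp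
  from assms(2) consider (lift) S where "S \<in> A" "T = insert p S"
    | (keep) "T \<in> B" "T \<notin> A" "T \<noteq> D" | (D) "T = D" | (insert_D) "T = insert p D"
    unfolding extended_collection_def by blast
  then show ?thesis
  proof cases
    case lift
    then show ?thesis using v_lift by (simp add: extended_weights_lift)
  next
    case keep
    then show ?thesis
      using proj[of T] by (simp add: proj_weights_extended_collection extended_weights_keep)
  next
    case D
    then show ?thesis
      using proj[OF D_in] v_insert_D D_notin proj_weights_extended_collection[OF D_in]
      by (simp add: extended_weights_D)
  next
    case insert_D
    then show ?thesis using v_insert_D by (simp add: extended_weights_insert_D)
  qed
qed

lemma minimal_balanced_extended_collection:
  "minimal_balanced (insert p N) extended_collection"
  unfolding minimal_balanced_iff_weights_positive balanced_def
  using balancing_extended_weights weakly_balancing_extended_unique extended_weights_positive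
  by auto

end

theorem lemma4p3:
  fixes N :: "'a set" and p :: 'a and k :: nat and S :: "nat \<Rightarrow> 'a set"
    and lam :: "'a set \<Rightarrow> real" and I :: "nat set" and \<delta> :: nat
  assumes "finite N" and "N \<noteq> {}" and "p \<notin> N"
    and "inj_on S {1..k}"
    and "minimal_balanced N (S ` {1..k})"
    and "balancing_weights N (S ` {1..k}) lam"
    and "I \<subseteq> {1..k}" and "\<delta> \<in> {1..k} - I"
    and "(\<Sum>i\<in>I. lam (S i)) < 1"
    and "(\<Sum>i\<in>I. lam (S i)) > 1 - lam (S \<delta>)"
  shows "minimal_balanced (insert p N)
           ((\<lambda>i. insert p (S i)) ` I \<union> S ` ({1..k} - I) \<union> {insert p (S \<delta>)})
       \<and> balancing_weights (insert p N)
           ((\<lambda>i. insert p (S i)) ` I \<union> S ` ({1..k} - I) \<union> {insert p (S \<delta>)})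
           (\<lambda>T. if T = insert p (S \<delta>) then 1 - (\<Sum>i\<in>I. lam (S i))
                 else if T = S \<delta> then lam (S \<delta>) - (1 - (\<Sum>i\<in>I. lam (S i)))
                 else if p \<in> T then lam (T - {p})
                 else lam T)"
proof -
  have sum_I: "sum lam (S ` I) = (\<Sum>i\<in>I. lam (S i))"
    using inj_on_subset[OF assms(4,7)] by (simp add: sum.reindex)
  have "S \<delta> \<notin> S ` I"
    using assms(4,7,8) by (auto simp: inj_on_image_mem_iff)
  then interpret balanced_extension N "S ` {1..k}" lam "S ` I" "S \<delta>" p
    using assms sum_I by unfold_locales auto
  have "extended_collection
      = (\<lambda>i. insert p (S i)) ` I \<union> S ` ({1..k} - I) \<union> {insert p (S \<delta>)}"
    unfolding extended_collection_def using assms(4,7)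
    by (simp add: image_image inj_on_image_set_diff)
  moreover have "extended_weights =
      (\<lambda>T. if T = insert p (S \<delta>) then 1 - (\<Sum>i\<in>I. lam (S i))
           else if T = S \<delta> then lam (S \<delta>) - (1 - (\<Sum>i\<in>I. lam (S i)))
           else if p \<in> T then lam (T - {p})
           else lam T)"
    unfolding extended_weights_def sum_I ..
  ultimately show ?thesis
    using minimal_balanced_extended_collection balancing_extended_weights by simp
qed

end
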